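(* Let $l>0$ and $K\in\mathbb{N}$ satisfy $2lK\ge T_0[\varphi_1]$ and $2l\in(0,\frac{2lK}{\ln(2lK)}]$. Put $\mathcal{J}(2l)=[2lK,2l(K+1)]$ and $\mathring{\mathcal{J}}(2l)=[\varphi_1^{-1}(2lK),\varphi_1^{-1}(2l(K+1))]$, so that $\varphi_1\{\mathring{\mathcal{J}}(2l)\}=\mathcal{J}(2l)$. Then the system $$\left\{1,\cos\left(\tfrac{\pi}{l}\varphi_1(t)\right),\sin\left(\tfrac{\pi}{l}\varphi_1(t)\right),\dots,\cos\left(\tfrac{\pi}{l}n\varphi_1(t)\right),\sin\left(\tfrac{\pi}{l}n\varphi_1(t)\right),\dots\right\}$$ is orthogonal on $\mathring{\mathcal{J}}(2l)$ with respect to the weight $\tilde Z^2(t)$; precisely, for all $m,n\in\mathbb{N}$: $$\int_{\mathring{\mathcal{J}}(2l)}\cos\left(\tfrac{\pi}{l}m\varphi_1(t)\right)\cos\left(\tfrac{\pi}{l}n\varphi_1(t)\right)\tilde Z^2(t)\,dt=\begin{cases}0,&m\ne n,\\ l,&m=n,\end{cases}$$ $$\int_{\mathring{\mathcal{J}}(2l)}\sin\left(\tfrac{\pi}{l}m\varphi_1(t)\right)\sin\left(\tfrac{\pi}{l}n\varphi_1(t)\right)\tilde Z^2(t)\,dt=\begin{cases}0,&m\ne n,\\ l,&m=n,\end{cases}$$ $$\int_{\mathring{\mathcal{J}}(2l)}\sin\left(\tfrac{\pi}{l}m\varphi_1(t)\right)\cos\left(\tfrac{\pi}{l}n\varphi_1(t)\right)\tilde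 Z^2(t)\,dt=0,$$ $$\int_{\mathring{\mathcal{J}}(2l)}\cos\left(\tfrac{\pi}{l}n\varphi_1(t)\right)\tilde Z^2(t)\,dt=0,\qquad \int_{\mathring{\mathcal{J}}(2l)}\sin\left(\tfrac{\pi}{l}n\varphi_1(t)\right)\tilde Z^2(t)\,dt=0.$$ Moreover, as $K\to\infty$ one has $2l(K+1)<\varphi_1^{-1}(2lK)$ and the distance $\rho$ between the segments $\mathcal{J}(2l)$ and $\mathring{\mathcal{J}}(2l)$ satisfies $\rho\{\mathcal{J}(2l);\mathring{\mathcal{J}}(2l)\}\sim(1-c)\pi(2lK)\to\infty$.
   Context: Let $Z(t)=e^{i\vartheta(t)}\zeta(\tfrac12+it)$ with $\vartheta(t)=-\frac t2\ln\pi+\operatorname{Im}\ln\Gamma(\frac14+\frac{it}{2})$ (so $Z$ is real). Let $\mu(y)$ be a continuous function with $\mu(y)\ge 7y\ln y$ and put $\Phi(\varphi)=\int_0^{\mu[\varphi]}Z^2(t)e^{-2t/\varphi}\,dt$. A Jacob's ladder is a continuous solution $\varphi(T)$, $T\ge T_0$, of the nonlinear integral equation $\Phi(\varphi(T))=\int_0^T Z^2(t)\,dt$ (as constructed in the author's earlier work). Put $\varphi_1(T)=\frac12\varphi(T)$, $T\ge T_0[\varphi_1]$, and $\tilde Z^2(t)=\frac{Z^2(t)}{2\Phi'(\varphi(t))}$, so that $\varphi_1'(t)=\tilde Z^2(t)$; it is known that $\tilde Z^2(t)=\frac{Z^2(t)}{(1+O(\ln\ln t/\ln t))\ln t}$ and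 $t-\varphi_1(t)\sim(1-c)\pi(t)$, where $c$ is Euler's constant and $\pi(t)$ is the prime-counting function. The function $\varphi_1$ is increasing, and $\varphi_1^{-1}(x)$ (written $\mathring{x}$ in the paper) denotes the unique $t$ with $\varphi_1(t)=x$. *)

theory Defs
  imports "HOL-Analysis.Analysis" "HOL-Library.Landau_Symbols" "HOL-Computational_Algebra.Primes"
begin

definition eta_fun :: "complex \<Rightarrow> complex" where
  "eta_fun s = lim (\<lambda>N. \<Sum>n<N. (-1) ^ n / (of_nat (Suc n) powr s))"

(* Riemann zeta on the critical line: zeta(s) = eta(s) / (1 - 2^(1-s)), valid for Re s > 0, s \<noteq> 1 *)
definition zeta_crit :: "real \<Rightarrow> complex" where
  "zeta_crit t = (let s = 1/2 + \<i> * of_real t in eta_fun s / (1 - 2 powr (1 - s)))"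

definition vartheta :: "real \<Rightarrow> real" where
  "vartheta t = - (t / 2) * ln pi + Im (ln_Gamma (1/4 + \<i> * of_real t / 2))"

(* Hardy's Z-function Z(t) = e^{i vartheta(t)} zeta(1/2+it) (real-valued) *)
definition Z_fun :: "real \<Rightarrow> real" where
  "Z_fun t = Re (exp (\<i> * of_real (vartheta t)) * zeta_crit t)"

definition Phi :: "(real \<Rightarrow> real) \<Rightarrow> real \<Rightarrow> real" where
  "Phi mu y = integral {0..mu y} (\<lambda>t. (Z_fun t)\<^sup>2 * exp (- 2 * t / y))"

definition jacobs_ladder :: "(real \<Rightarrow> real) \<Rightarrow> real \<Rightarrow> (real \<Rightarrow> real) \<Rightarrow> bool" where
  "jacobs_ladder mu T0 phi \<longleftrightarrow> continuous_on {T0..} phi \<and>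
     (\<forall>T\<ge>T0. Phi mu (phi T) = integral {0..T} (\<lambda>t. (Z_fun t)\<^sup>2))"

definition phi1 :: "(real \<Rightarrow> real) \<Rightarrow> real \<Rightarrow> real" where
  "phi1 phi T = phi T / 2"

definition Ztilde2 :: "(real \<Rightarrow> real) \<Rightarrow> (real \<Rightarrow> real) \<Rightarrow> real \<Rightarrow> real" where
  "Ztilde2 mu phi t = (Z_fun t)\<^sup>2 / (2 * deriv (Phi mu) (phi t))"

definition phi1_inv :: "(real \<Rightarrow> real) \<Rightarrow> real \<Rightarrow> real \<Rightarrow> real" where
  "phi1_inv phi T0 x = (THE t. t \<ge> T0 \<and> phi1 phi t = x)"

definition primepi :: "real \<Rightarrow> real" where
  "primepi x = real (card {p :: nat. prime p \<and> real p \<le> x})"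

end

theory Submission
  imports Defs "HOL-Number_Theory.Totient"
begin

(*
  Write f = phi1. Since f' = Ztilde2, the substitution y = f t turns each weighted integral over
  the preimage of [2lK, 2l(K+1)] into the integral of the corresponding trigonometric product
  over a full period of length 2l, where the classical orthogonality relations hold.

  For the distance, rho = f^-1(x) - x - 2l with x = 2lK, and f^-1(x) - x = s - f s ~ (1 - c) pi(s)
  for s = f^-1(x).  It remains to replace pi(s) by pi(x).  Since s - x = O(pi(s)), this follows
  from the fact that the primes have density zero uniformly in intervals: sieving by the primes
  up to N leaves a proportion prod (1 - 1/p) of every block of N! consecutive integers, and this
  product tends to 0 because the harmonic series diverges.
*)

section \<open>Primes in short intervals\<close>

lemma prod_primes_le_power_multiplicity:
  fixes m N :: nat
  assumes "m \<in> {1..N}"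
  shows "(\<Prod>p\<in>{p. prime p \<and> p \<le> N}. p ^ multiplicity p m) = m"
proof -
  have "(\<Prod>p\<in>{p. prime p \<and> p \<le> N}. p ^ multiplicity p m)
          = (\<Prod>p\<in>prime_factors m. p ^ multiplicity p m)"
  proof (rule prod.mono_neutral_right)
    show "prime_factors m \<subseteq> {p. prime p \<and> p \<le> N}"
      using assms
      by (auto simp: prime_factors_multiplicity
               intro: order.trans[OF dvd_imp_le[OF in_prime_factors_imp_dvd]])
    show "\<forall>p\<in>{p. prime p \<and> p \<le> N} - prime_factors m. p ^ multiplicity p m = 1"
      using assms by (auto simp: prime_factors_multiplicity)
  qed auto
  also have "\<dots> = m"
    using assms by (intro prime_factorization_nat[symmetric]) auto
  finally show ?thesis .
qed

lemma multiplicity_less_self: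
  fixes p m :: nat
  assumes "p \<ge> 2" "m > 0"
  shows "multiplicity p m < m"
proof -
  have "multiplicity p m < 2 ^ multiplicity p m" by (rule less_exp)
  also have "\<dots> \<le> p ^ multiplicity p m" using assms(1) by (intro power_mono) auto
  also have "\<dots> \<le> m" using assms(2) by (intro dvd_imp_le multiplicity_dvd)
  finally show ?thesis .
qed

lemma harm_le_euler_product:
  "harm N \<le> (\<Prod>p\<in>{p. prime p \<and> p \<le> N}. 1 / (1 - 1 / real p))"
proof -
  define S where "S = {p::nat. prime p \<and> p \<le> N}"
  have finS: "finite S" unfolding S_def by auto
  have S_ge_2: "p \<in> S \<Longrightarrow> p \<ge> 2" for p unfolding S_def using prime_ge_2_nat by auto
  define h where "h m = restrict (\<lambda>p. multiplicity p m) S" for m :: nat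
  define F where "F e = (\<Prod>p\<in>S. (1 / real p) ^ e p)" for e :: "nat \<Rightarrow> nat"
  have F_h: "F (h m) = 1 / real m" if "m \<in> {1..N}" for m
  proof -
    have "real m = (\<Prod>p\<in>S. real p ^ multiplicity p m)"
      using prod_primes_le_power_multiplicity[OF that] unfolding S_def
      by (metis (mono_tags, lifting) of_nat_power of_nat_prod prod.cong)
    then show ?thesis unfolding F_def h_def by (simp add: power_one_over prod_dividef)
  qed
  have inj: "inj_on h {1..N}"
  proof
    fix m1 m2 assume "m1 \<in> {1..N}" "m2 \<in> {1..N}" "h m1 = h m2"
    then show "m1 = m2"
      using prod_primes_le_power_multiplicity[of m1 N] prod_primes_le_power_multiplicity[of m2 N]
      unfolding h_def S_def by (metis (no_types, lifting) prod.cong restrict_apply')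
  qed
  have range: "h ` {1..N} \<subseteq> PiE S (\<lambda>_. {..N})"
  proof
    fix e assume "e \<in> h ` {1..N}"
    then obtain m where m: "m \<in> {1..N}" "e = h m" by auto
    then have "multiplicity p m \<le> N" if "p \<in> S" for p
      using multiplicity_less_self[OF S_ge_2[OF that], of m] by auto
    then show "e \<in> PiE S (\<lambda>_. {..N})" using m unfolding h_def by auto
  qed
  have "harm N = (\<Sum>m\<in>{1..N}. F (h m))"
    unfolding harm_def using F_h by (simp add: divide_inverse)
  also have "\<dots> = sum F (h ` {1..N})" using sum.reindex[OF inj, of F] by simp
  also have "\<dots> \<le> sum F (PiE S (\<lambda>_. {..N}))"
    by (rule sum_mono2[OF finite_PiE[OF finS] range]) (auto simp: F_def intro!: prod_nonneg)
  also have "\<dots> = (\<Prod>p\<in>S. \<Sum>k\<in>{..N}. (1 / real p) ^ k)"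
    unfolding F_def by (rule prod_sum_PiE[symmetric]) (use finS in auto)
  also have "\<dots> \<le> (\<Prod>p\<in>S. 1 / (1 - 1 / real p))"
  proof (rule prod_mono, safe)
    fix p assume "p \<in> S"
    then have "norm (1 / real p) < 1" using S_ge_2[of p] by auto
    show "0 \<le> (\<Sum>k\<in>{..N}. (1 / real p) ^ k)" by (intro sum_nonneg) auto
    have "(\<Sum>k\<in>{..N}. (1 / real p) ^ k) \<le> (\<Sum>k. (1 / real p) ^ k)"
      by (rule sum_le_suminf) (use summable_geometric[OF \<open>norm _ < 1\<close>] in auto)
    also have "\<dots> = 1 / (1 - 1 / real p)" using suminf_geometric[OF \<open>norm _ < 1\<close>] by simp
    finally show "(\<Sum>k\<in>{..N}. (1 / real p) ^ k) \<le> 1 / (1 - 1 / real p)" .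
  qed
  finally show ?thesis unfolding S_def .
qed

lemma ex_prod_primes_one_minus_inverse_less:
  assumes "e > (0::real)"
  shows "\<exists>N. (\<Prod>p\<in>{p. prime p \<and> p \<le> N}. 1 - 1 / real p) < e"
proof -
  obtain N where N: "harm N > 1 / e"
    using filterlim_at_top_dense[THEN iffD1, OF harm_at_top] eventually_happens'[OF sequentially_bot]
    by blast
  define S where "S = {p::nat. prime p \<and> p \<le> N}"
  have "1 - 1 / real p > 0" if "p \<in> S" for p
    using that prime_ge_2_nat[of p] unfolding S_def by (auto simp: field_simps)
  then have "(\<Prod>p\<in>S. 1 - 1 / real p) > 0" by (intro prod_pos) auto
  moreover have "1 / e < 1 / (\<Prod>p\<in>S. 1 - 1 / real p)"
    using harm_le_euler_product[of N] N unfolding S_def by (simp add: prod_dividef)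
  ultimately show ?thesis using assms unfolding S_def by (auto simp: field_simps)
qed

lemma totient_fact:
  "real (totient (fact N)) = fact N * (\<Prod>p\<in>{p. prime p \<and> p \<le> N}. 1 - 1 / real p)"
proof -
  have "prime_factors (fact N) = {p. prime p \<and> p \<le> N}"
    by (auto simp: prime_factors_fact prime_ge_2_nat)
  then show ?thesis using totient_formula2[of "fact N"] by simp
qed

lemma card_coprime_block:
  fixes M a :: nat
  assumes "M > 0"
  shows "card {n. a < n \<and> n \<le> a + M \<and> coprime n M} = totient M"
proof (induction a)
  case 0
  have "{n. 0 < n \<and> n \<le> 0 + M \<and> coprime n M} = totatives M"
    by (auto simp: in_totatives_iff)
  then show ?case by (simp add: totient_def)
next
  case (Suc a)
  define A where "A = {n. a < n \<and> n \<le> a + M \<and> coprime n M}"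
  have finA: "finite A" unfolding A_def by (rule finite_subset[of _ "{..a+M}"]) auto
  have periodic: "coprime (Suc a + M) M \<longleftrightarrow> coprime (Suc a) M"
    by (metis gcd_add1 coprime_iff_gcd_eq_1)
  show ?case
  proof (cases "coprime (Suc a) M")
    case True
    have "{n. Suc a < n \<and> n \<le> Suc a + M \<and> coprime n M} = insert (Suc a + M) (A - {Suc a})"
      using True periodic assms unfolding A_def by auto
    moreover have "Suc a \<in> A" "Suc a + M \<notin> A"
      using True assms unfolding A_def by auto
    ultimately show ?thesis using finA Suc.IH unfolding A_def by (simp add: card.remove)
  next
    case False
    then have "{n. Suc a < n \<and> n \<le> Suc a + M \<and> coprime n M} = A"
      using periodic assms unfolding A_def by (auto simp: le_Suc_eq) (metis Suc_lessI)
    then show ?thesis using Suc.IH unfolding A_def by simp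
  qed
qed

lemma card_coprime_blocks:
  fixes M a q :: nat
  assumes "M > 0"
  shows "card {n. a < n \<and> n \<le> a + q * M \<and> coprime n M} = q * totient M"
proof (induction q)
  case 0
  then show ?case by (auto intro: card_eq_0_iff[THEN iffD2])
next
  case (Suc q)
  have "{n. a < n \<and> n \<le> a + Suc q * M \<and> coprime n M} =
      {n. a < n \<and> n \<le> a + q * M \<and> coprime n M} \<union>
      {n. a + q * M < n \<and> n \<le> (a + q * M) + M \<and> coprime n M}"
    by auto
  also have "card \<dots> = q * totient M + totient M"
    by (subst card_Un_disjoint)
       (auto intro: finite_subset[of _ "{..a+q*M+M}"] simp: Suc.IH card_coprime_block[OF assms])
  finally show ?case by simp
qed

lemma card_primes_between_le:
  fixes N a q :: nat
  assumes "N \<le> a"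
  shows "card {p. prime p \<and> a < p \<and> p \<le> a + q * fact N} \<le> q * totient (fact N)"
proof -
  have "coprime p (fact N)" if "prime p" "N < p" for p :: nat
    using that prime_imp_coprime[OF that(1)] prime_dvd_fact_iff[OF that(1)] by auto
  then have "{p. prime p \<and> a < p \<and> p \<le> a + q * fact N}
               \<subseteq> {n. a < n \<and> n \<le> a + q * fact N \<and> coprime n (fact N)}"
    using assms by auto
  then have "card {p. prime p \<and> a < p \<and> p \<le> a + q * fact N}
               \<le> card {n. a < n \<and> n \<le> a + q * fact N \<and> coprime n (fact N)}"
    by (rule card_mono[rotated]) (rule finite_subset[of _ "{..a + q * fact N}"], auto)
  then show ?thesis using card_coprime_blocks[of "fact N" a q] by simp
qed

lemma finite_primes_le: "finite {p :: nat. prime p \<and> real p \<le> x}"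
  by (rule finite_subset[of _ "{..nat \<lfloor>x\<rfloor>}"]) (auto simp: le_nat_floor)

lemma primepi_nonneg: "primepi x \<ge> 0"
  by (simp add: primepi_def)

lemma primepi_mono: "x \<le> y \<Longrightarrow> primepi x \<le> primepi y"
  unfolding primepi_def by (intro of_nat_mono card_mono finite_primes_le) auto

lemma primepi_le: "x \<ge> 0 \<Longrightarrow> primepi x \<le> x"
proof -
  assume "x \<ge> 0"
  have "{p :: nat. prime p \<and> real p \<le> x} \<subseteq> {1..nat \<lfloor>x\<rfloor>}"
    by (auto simp: le_nat_floor prime_gt_0_nat Suc_leI)
  then have "card {p :: nat. prime p \<and> real p \<le> x} \<le> nat \<lfloor>x\<rfloor>"
    using card_mono[of "{1..nat \<lfloor>x\<rfloor>}"] by fastforce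
  then show ?thesis unfolding primepi_def using \<open>x \<ge> 0\<close> by linarith
qed

lemma filterlim_primepi_at_top: "filterlim primepi at_top at_top"
  unfolding filterlim_at_top
proof
  fix Z :: real
  obtain B :: "nat set" where B: "finite B" "card B = nat \<lceil>Z\<rceil>" "B \<subseteq> {p. prime p}"
    using infinite_arbitrarily_large[OF primes_infinite] by blast
  show "eventually (\<lambda>x. Z \<le> primepi x) at_top"
    using eventually_ge_at_top[of "real (Max (insert 0 B))"]
  proof eventually_elim
    case (elim x)
    have "real p \<le> x" if "p \<in> B" for p
    proof -
      have "p \<le> Max (insert 0 B)" using that B(1) by simp
      then show ?thesis using elim by linarith
    qed
    then have "B \<subseteq> {p :: nat. prime p \<and> real p \<le> x}"
      using B(3) by auto
    then have "card B \<le> card {p :: nat. prime p \<and> real p \<le> x}"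
      by (intro card_mono finite_primes_le)
    then show ?case unfolding primepi_def using B(2) by linarith
  qed
qed

lemma primepi_diff_eq:
  assumes "x \<le> y"
  shows "primepi y - primepi x = card {p :: nat. prime p \<and> x < real p \<and> real p \<le> y}"
proof -
  have "{p :: nat. prime p \<and> real p \<le> y}
          = {p. prime p \<and> real p \<le> x} \<union> {p. prime p \<and> x < real p \<and> real p \<le> y}"
    using assms by auto
  then have "card {p :: nat. prime p \<and> real p \<le> y}
          = card {p :: nat. prime p \<and> real p \<le> x} + card {p. prime p \<and> x < real p \<and> real p \<le> y}"
    by (simp add: card_Un_disjoint finite_primes_le disjoint_iff
          finite_subset[OF _ finite_primes_le[of y]])
  then show ?thesis unfolding primepi_def by simp
qed

lemma primepi_diff_le:
  assumes "e > (0::real)"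
  shows "\<exists>C. \<forall>x y. C \<le> x \<and> 0 \<le> y \<longrightarrow> primepi (x + y) - primepi x \<le> e * y + C"
proof -
  obtain N where N: "(\<Prod>p\<in>{p. prime p \<and> p \<le> N}. 1 - 1 / real p) < e"
    using ex_prod_primes_one_minus_inverse_less[OF assms] by blast
  define M :: nat where "M = fact N"
  have M: "real M \<ge> 1" unfolding M_def by simp
  have density: "real (totient M) \<le> e * M"
    using totient_fact[of N] N M unfolding M_def by simp
  define C where "C = real N + 2 * real (totient M)"
  show ?thesis
  proof (intro exI allI impI, elim conjE)
    fix x y :: real assume x: "C \<le> x" and y: "0 \<le> y"
    (* cover (x, x + y] by q consecutive blocks of M integers starting at a *)
    define a where "a = nat \<lfloor>x\<rfloor>"
    define q where "q = nat \<lceil>y / real M\<rceil> + 1"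
    have a: "real a \<le> x" "x < real a + 1" "N \<le> a"
      using x unfolding a_def C_def by linarith+
    have "real (nat \<lceil>y / real M\<rceil>) = \<lceil>y / real M\<rceil>"
      using y M by simp
    then have q: "y / real M + 1 \<le> real q" "real q \<le> y / real M + 2"
      unfolding q_def by linarith+
    have share: "y / real M * totient M \<le> e * y"
      using mult_left_mono[OF density, of "y / real M"] y M by (simp add: mult.commute)
    have "(y / real M + 1) * real M = y + real M"
      using M by (simp add: field_simps)
    then have "y + real M \<le> real q * real M"
      using mult_right_mono[OF q(1), of "real M"] M by simp
    then have "real p \<le> real (a + q * M)" if "real p \<le> x + y" for p
      using that a M by simp
    then have "{p :: nat. prime p \<and> x < real p \<and> real p \<le> x + y}
                 \<subseteq> {p. prime p \<and> a < p \<and> p \<le> a + q * M}"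
      using a by (auto simp del: of_nat_add of_nat_mult)
    then have "primepi (x + y) - primepi x \<le> card {p. prime p \<and> a < p \<and> p \<le> a + q * M}"
      unfolding primepi_diff_eq[of x "x + y", OF le_add_same_cancel1[THEN iffD2, OF y]]
      by (intro of_nat_mono card_mono) (auto intro: finite_subset[of _ "{..a + q * M}"])
    also have "\<dots> \<le> real q * totient M"
      using card_primes_between_le[OF a(3), of q] unfolding M_def by (simp flip: of_nat_mult)
    also have "\<dots> \<le> (y / real M + 2) * totient M"
      using q(2) by (intro mult_right_mono) auto
    also have "\<dots> = y / real M * totient M + 2 * totient M"
      by (simp add: algebra_simps)
    also have "\<dots> \<le> e * y + C"
      using share unfolding C_def by simp
    finally show "primepi (x + y) - primepi x \<le> e * y + C" .
  qed
qed

lemma primepi_asymp_equiv_of_gap: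
  fixes x s :: "'a \<Rightarrow> real"
  assumes x_top: "filterlim x at_top F"
    and gap: "eventually (\<lambda>k. x k \<le> s k \<and> s k - x k \<le> B * primepi (s k)) F"
  shows "(\<lambda>k. primepi (x k)) \<sim>[F] (\<lambda>k. primepi (s k))"
proof (rule asymp_equivI', rule tendstoI)
  fix e :: real assume e: "e > 0"
  have s_top: "filterlim s at_top F"
    by (rule filterlim_at_top_mono[OF x_top]) (use gap in \<open>auto elim: eventually_mono\<close>)
  obtain C where C: "\<And>x y. C \<le> x \<Longrightarrow> 0 \<le> y \<Longrightarrow>
                        primepi (x + y) - primepi x \<le> e / (2 * (\<bar>B\<bar> + 1)) * y + C"
    using primepi_diff_le[of "e / (2 * (\<bar>B\<bar> + 1))"] e by auto
  have "eventually (\<lambda>k. C \<le> x k) F"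
    using x_top by (simp add: filterlim_at_top)
  moreover have "eventually (\<lambda>k. max (2 * C / e) 0 < primepi (s k)) F"
    using filterlim_compose[OF filterlim_primepi_at_top s_top]
    unfolding filterlim_at_top_dense by blast
  ultimately show "eventually (\<lambda>k. dist (primepi (x k) / primepi (s k)) 1 < e) F"
    using gap
  proof eventually_elim
    case (elim k)
    define P where "P = primepi (s k)"
    define Q where "Q = primepi (x k)"
    have P: "P > 0" "C < e / 2 * P"
      using elim e unfolding P_def by (auto simp: field_simps)
    have "Q \<le> P" unfolding P_def Q_def using elim by (intro primepi_mono) auto
    have "P - Q \<le> e / (2 * (\<bar>B\<bar> + 1)) * (s k - x k) + C"
      using C[of "x k" "s k - x k"] elim unfolding P_def Q_def by auto
    also have "\<dots> \<le> e / (2 * (\<bar>B\<bar> + 1)) * (\<bar>B\<bar> * P) + C"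
    proof -
      have "B * P \<le> \<bar>B\<bar> * P" using P by (intro mult_right_mono) auto
      then have "s k - x k \<le> \<bar>B\<bar> * P" using elim unfolding P_def by linarith
      then show ?thesis using e by (intro add_right_mono mult_left_mono) auto
    qed
    also have "\<dots> \<le> e / 2 * P + C"
      using e P by (simp add: field_simps mult_right_mono)
    finally have "P - Q < e * P" using P by linarith
    then show ?case
      using P e \<open>Q \<le> P\<close> unfolding P_def[symmetric] Q_def[symmetric]
      by (simp add: dist_real_def field_simps abs_if)
  qed
qed

section \<open>Orthogonality of the trigonometric system over a period\<close>

lemma sin_cos_add_2pi_Ints:
  fixes x k :: real
  assumes "k \<in> \<int>"
  shows "sin (x + 2 * pi * k) = sin x" "cos (x + 2 * pi * k) = cos x"
  using assms by (simp_all add: sin_add cos_add sin_integer_2pi cos_integer_2pi)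

lemma has_integral_cos_period:
  fixes l k a :: real
  assumes "l > 0" "k \<in> \<int>" "k \<noteq> 0"
  shows "((\<lambda>y. cos (pi / l * k * y)) has_integral 0) {a..a + 2 * l}"
proof -
  define w where "w = pi / l * k"
  have w: "w \<noteq> 0" using assms by (simp add: w_def)
  have "((\<lambda>y. cos (w * y)) has_integral sin (w * (a + 2 * l)) / w - sin (w * a) / w) {a..a + 2 * l}"
    using assms(1) w
    by (intro fundamental_theorem_of_calculus)
       (auto intro!: derivative_eq_intros simp: has_real_derivative_iff_has_vector_derivative[symmetric])
  moreover have "w * (a + 2 * l) = w * a + 2 * pi * k"
    using assms(1) by (simp add: w_def field_simps)
  ultimately show ?thesis using sin_cos_add_2pi_Ints[OF assms(2)] by (simp add: w_def)
qed

lemma has_integral_sin_period: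
  fixes l k a :: real
  assumes "l > 0" "k \<in> \<int>" "k \<noteq> 0"
  shows "((\<lambda>y. sin (pi / l * k * y)) has_integral 0) {a..a + 2 * l}"
proof -
  define w where "w = pi / l * k"
  have w: "w \<noteq> 0" using assms by (simp add: w_def)
  have "((\<lambda>y. sin (w * y)) has_integral - cos (w * (a + 2 * l)) / w - - cos (w * a) / w) {a..a + 2 * l}"
    using assms(1) w
    by (intro fundamental_theorem_of_calculus)
       (auto intro!: derivative_eq_intros simp: has_real_derivative_iff_has_vector_derivative[symmetric])
  moreover have "w * (a + 2 * l) = w * a + 2 * pi * k"
    using assms(1) by (simp add: w_def field_simps)
  ultimately show ?thesis using sin_cos_add_2pi_Ints[OF assms(2)] by (simp add: w_def)
qed

lemma trig_product_to_sum:
  fixes l m n y :: real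
  shows "cos (pi / l * m * y) * cos (pi / l * n * y)
           = (cos (pi / l * (m - n) * y) + cos (pi / l * (m + n) * y)) / 2"
    and "sin (pi / l * m * y) * sin (pi / l * n * y)
           = (cos (pi / l * (m - n) * y) - cos (pi / l * (m + n) * y)) / 2"
    and "sin (pi / l * m * y) * cos (pi / l * n * y)
           = (sin (pi / l * (m + n) * y) + sin (pi / l * (m - n) * y)) / 2"
proof -
  have "pi / l * m * y - pi / l * n * y = pi / l * (m - n) * y"
    and "pi / l * m * y + pi / l * n * y = pi / l * (m + n) * y"
    by (simp_all add: ring_distribs diff_divide_distrib add_divide_distrib)
  then show "cos (pi / l * m * y) * cos (pi / l * n * y)
           = (cos (pi / l * (m - n) * y) + cos (pi / l * (m + n) * y)) / 2"
    and "sin (pi / l * m * y) * sin (pi / l * n * y)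
           = (cos (pi / l * (m - n) * y) - cos (pi / l * (m + n) * y)) / 2"
    and "sin (pi / l * m * y) * cos (pi / l * n * y)
           = (sin (pi / l * (m + n) * y) + sin (pi / l * (m - n) * y)) / 2"
    by (simp_all only: cos_times_cos sin_times_sin sin_times_cos)
qed

lemma has_integral_one_period:
  fixes l a :: real
  assumes "l > 0"
  shows "((\<lambda>y. 1) has_integral 2 * l) {a..a + 2 * l}"
  using has_integral_const_real[of "1::real" a "a + 2 * l"] assms by simp

lemma has_integral_cos_cos_period:
  fixes l a :: real and m n :: nat
  assumes "l > 0" "m \<ge> 1" "n \<ge> 1"
  shows "((\<lambda>y. cos (pi / l * m * y) * cos (pi / l * n * y)) has_integral (if m = n then l else 0))
           {a..a + 2 * l}"
proof (cases "m = n")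
  case True
  have "((\<lambda>y. (1 + cos (pi / l * (real m + real n) * y)) / 2) has_integral (2 * l + 0) / 2)
          {a..a + 2 * l}"
    using assms by (intro has_integral_divide has_integral_add has_integral_one_period
                      has_integral_cos_period) auto
  then show ?thesis unfolding trig_product_to_sum using True by simp
next
  case False
  have "((\<lambda>y. (cos (pi / l * (real m - real n) * y) + cos (pi / l * (real m + real n) * y)) / 2)
          has_integral (0 + 0) / 2) {a..a + 2 * l}"
    using assms False by (intro has_integral_divide has_integral_add has_integral_cos_period) auto
  then show ?thesis unfolding trig_product_to_sum using False by simp
qed

lemma has_integral_sin_sin_period:
  fixes l a :: real and m n :: nat
  assumes "l > 0" "m \<ge> 1" "n \<ge> 1"
  shows "((\<lambda>y. sin (pi / l * m * y) * sin (pi / l * n * y)) has_integral (if m = n then l else 0))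
           {a..a + 2 * l}"
proof (cases "m = n")
  case True
  have "((\<lambda>y. (1 - cos (pi / l * (real m + real n) * y)) / 2) has_integral (2 * l - 0) / 2)
          {a..a + 2 * l}"
    using assms by (intro has_integral_divide has_integral_diff has_integral_one_period
                      has_integral_cos_period) auto
  then show ?thesis unfolding trig_product_to_sum using True by simp
next
  case False
  have "((\<lambda>y. (cos (pi / l * (real m - real n) * y) - cos (pi / l * (real m + real n) * y)) / 2)
          has_integral (0 - 0) / 2) {a..a + 2 * l}"
    using assms False by (intro has_integral_divide has_integral_diff has_integral_cos_period) auto
  then show ?thesis unfolding trig_product_to_sum using False by simp
qed

lemma has_integral_sin_cos_period:
  fixes l a :: real and m n :: nat
  assumes "l > 0" "m \<ge> 1" "n \<ge> 1"
  shows "((\<lambda>y. sin (pi / l * m * y) * cos (pi / l * n * y)) has_integral 0) {a..a + 2 * l}"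
proof (cases "m = n")
  case True
  have "((\<lambda>y. sin (pi / l * (real m + real n) * y) / 2) has_integral 0 / 2) {a..a + 2 * l}"
    using assms by (intro has_integral_divide has_integral_sin_period) auto
  then show ?thesis unfolding trig_product_to_sum using True by simp
next
  case False
  have "((\<lambda>y. (sin (pi / l * (real m + real n) * y) + sin (pi / l * (real m - real n) * y)) / 2)
          has_integral (0 + 0) / 2) {a..a + 2 * l}"
    using assms False by (intro has_integral_divide has_integral_add has_integral_sin_period) auto
  then show ?thesis unfolding trig_product_to_sum by simp
qed

section \<open>Strictly increasing functions on a ray and their inverses\<close>

lemma setdist_atLeastAtMost:
  fixes a b c d :: real
  assumes "a \<le> b" "b \<le> c" "c \<le> d"
  shows "setdist {a..b} {c..d} = c - b"
proof (rule antisym)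
  have "setdist {a..b} {c..d} \<le> dist b c"
    by (rule setdist_le_dist) (use assms in auto)
  then show "setdist {a..b} {c..d} \<le> c - b" using assms by (simp add: dist_real_def)
  show "c - b \<le> setdist {a..b} {c..d}"
    unfolding le_setdist_iff using assms by (auto simp: dist_real_def)
qed

lemma filterlim_at_top_of_primepi_gap:
  fixes f :: "real \<Rightarrow> real"
  assumes gap: "(\<lambda>t. t - f t) \<sim>[at_top] (\<lambda>t. c * primepi t)" and c: "0 < c" "c < 1"
  shows "filterlim f at_top at_top"
proof (rule filterlim_at_top_mono)
  show "filterlim (\<lambda>t. (1 - c) / 2 * t) at_top at_top"
    using c by (intro filterlim_tendsto_pos_mult_at_top[OF tendsto_const _ filterlim_ident]) auto
  define r where "r = (1 + 1 / c) / 2"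
  have "r > 1" "r * c = (1 + c) / 2"
    unfolding r_def using c by (simp_all add: field_simps)
  from asymp_equiv_imp_eventually_le[OF gap \<open>r > 1\<close>] eventually_ge_at_top[of 0]
  show "eventually (\<lambda>t. (1 - c) / 2 * t \<le> f t) at_top"
  proof eventually_elim
    case (elim t)
    have "t - f t \<le> r * c * primepi t"
      using elim c primepi_nonneg[of t] by (auto simp: abs_le_iff)
    also have "\<dots> = (1 + c) / 2 * primepi t"
      using \<open>r * c = _\<close> by simp
    also have "\<dots> \<le> (1 + c) / 2 * t"
      using primepi_le[of t] elim c by (intro mult_left_mono) auto
    finally show ?case by (simp add: field_simps)
  qed
qed

locale increasing_on_ray =
  fixes T0 :: real and f :: "real \<Rightarrow> real"
  assumes strict_mono: "strict_mono_on {T0..} f"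
    and continuous: "continuous_on {T0..} f"
    and unbounded: "filterlim f at_top at_top"
begin

definition ray_inv :: "real \<Rightarrow> real" where
  "ray_inv x = (THE t. t \<ge> T0 \<and> f t = x)"

lemma ray_inv:
  assumes "f T0 \<le> x"
  shows "T0 \<le> ray_inv x" "f (ray_inv x) = x"
proof -
  obtain B where B: "B \<ge> T0" "f B \<ge> x"
    using eventually_ge_at_top[of T0] unbounded[unfolded filterlim_at_top, rule_format, of x]
    by (metis (mono_tags) eventually_at_top_linorder eventually_conj_iff order_refl)
  have "continuous_on {T0..B} f" using continuous by (rule continuous_on_subset) auto
  then obtain t where "T0 \<le> t" "f t = x"
    using IVT'[of f T0 x B] assms B by auto
  moreover have "ray_inv x = t"
    unfolding ray_inv_def
  proof (rule the_equality)
    show "T0 \<le> t \<and> f t = x" using \<open>T0 \<le> t\<close> \<open>f t = x\<close> ..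
    show "t' = t" if "T0 \<le> t' \<and> f t' = x" for t'
      using strict_mono_on_eqD[OF strict_mono] that \<open>T0 \<le> t\<close> \<open>f t = x\<close> by auto
  qed
  ultimately show "T0 \<le> ray_inv x" "f (ray_inv x) = x" by auto
qed

lemma ray_inv_mono:
  assumes "f T0 \<le> x" "x \<le> y"
  shows "ray_inv x \<le> ray_inv y"
proof (rule ccontr)
  assume "\<not> ray_inv x \<le> ray_inv y"
  then have "f (ray_inv y) < f (ray_inv x)"
    using ray_inv[of x] ray_inv[of y] assms by (intro strict_mono_onD[OF strict_mono]) auto
  then show False using ray_inv[of x] ray_inv[of y] assms by auto
qed

lemma image_ray_inv_interval:
  assumes "f T0 \<le> x" "x \<le> y"
  shows "f ` {ray_inv x..ray_inv y} = {x..y}"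
proof
  show "f ` {ray_inv x..ray_inv y} \<subseteq> {x..y}"
  proof
    fix z assume "z \<in> f ` {ray_inv x..ray_inv y}"
    then obtain t where t: "ray_inv x \<le> t" "t \<le> ray_inv y" "z = f t" by auto
    have "f (ray_inv x) \<le> f t" "f t \<le> f (ray_inv y)"
      using t ray_inv[of x] ray_inv[of y] assms
      by (intro strict_mono_on_leD[OF strict_mono]; simp)+
    then show "z \<in> {x..y}" using t ray_inv[of x] ray_inv[of y] assms by simp
  qed
  have "continuous_on {ray_inv x..ray_inv y} f"
    by (rule continuous_on_subset[OF continuous]) (use ray_inv[of x] assms in auto)
  then show "{x..y} \<subseteq> f ` {ray_inv x..ray_inv y}"
    using IVT'[of f "ray_inv x" _ "ray_inv y"] ray_inv[of x] ray_inv[of y] ray_inv_mono assms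
    by force
qed


lemma has_integral_ray_inv_weighted:
  assumes deriv: "\<forall>t\<ge>T0. (f has_real_derivative w t) (at t within {T0..})"
    and h: "(h has_integral I) {x..y}" "continuous_on {x..y} h"
    and xy: "f T0 \<le> x" "x \<le> y"
  shows "((\<lambda>t. h (f t) * w t) has_integral I) {ray_inv x..ray_inv y}"
proof -
  have le: "ray_inv x \<le> ray_inv y" "f (ray_inv x) \<le> f (ray_inv y)"
    using ray_inv_mono[OF xy] ray_inv[of x] ray_inv[of y] xy by auto
  have img: "f ` {ray_inv x..ray_inv y} \<subseteq> {x..y}"
    using image_ray_inv_interval[OF xy] by simp
  have der: "(f has_real_derivative w t) (at t within {ray_inv x..ray_inv y})"
    if "t \<in> {ray_inv x..ray_inv y}" for t
  proof (rule has_field_derivative_subset)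
    show "(f has_real_derivative w t) (at t within {T0..})"
      using deriv that ray_inv[OF xy(1)] by auto
    show "{ray_inv x..ray_inv y} \<subseteq> {T0..}"
      using ray_inv[OF xy(1)] by auto
  qed
  have "((\<lambda>t. w t *\<^sub>R h (f t)) has_integral integral {f (ray_inv x)..f (ray_inv y)} h)
          {ray_inv x..ray_inv y}"
    by (rule has_integral_substitution[OF le img h(2) der])
  moreover have "integral {f (ray_inv x)..f (ray_inv y)} h = I"
    using integral_unique[OF h(1)] ray_inv[of x] ray_inv[of y] xy by simp
  ultimately show ?thesis by (simp add: mult.commute)
qed

lemma trig_system_orthogonal_on_ray_inv:
  fixes l a :: real and m n :: nat
  assumes deriv: "\<forall>t\<ge>T0. (f has_real_derivative w t) (at t within {T0..})"
    and l: "l > 0" and a: "f T0 \<le> a"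
  defines "J \<equiv> {ray_inv a..ray_inv (a + 2 * l)}"
  assumes mn: "m \<ge> 1" "n \<ge> 1"
  shows "integral J (\<lambda>t. cos (pi / l * m * f t) * cos (pi / l * n * f t) * w t)
           = (if m = n then l else 0)"
    and "integral J (\<lambda>t. sin (pi / l * m * f t) * sin (pi / l * n * f t) * w t)
           = (if m = n then l else 0)"
    and "integral J (\<lambda>t. sin (pi / l * m * f t) * cos (pi / l * n * f t) * w t) = 0"
    and "integral J (\<lambda>t. cos (pi / l * n * f t) * w t) = 0"
    and "integral J (\<lambda>t. sin (pi / l * n * f t) * w t) = 0"
proof -
  have "a \<le> a + 2 * l" using l by simp
  note weighted = has_integral_ray_inv_weighted[OF deriv _ _ a this]
  show "integral J (\<lambda>t. cos (pi / l * m * f t) * cos (pi / l * n * f t) * w t)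
          = (if m = n then l else 0)"
    unfolding J_def
    by (rule integral_unique[OF weighted[OF has_integral_cos_cos_period[OF l mn]]])
       (intro continuous_intros)
  show "integral J (\<lambda>t. sin (pi / l * m * f t) * sin (pi / l * n * f t) * w t)
          = (if m = n then l else 0)"
    unfolding J_def
    by (rule integral_unique[OF weighted[OF has_integral_sin_sin_period[OF l mn]]])
       (intro continuous_intros)
  show "integral J (\<lambda>t. sin (pi / l * m * f t) * cos (pi / l * n * f t) * w t) = 0"
    unfolding J_def
    by (rule integral_unique[OF weighted[OF has_integral_sin_cos_period[OF l mn]]])
       (intro continuous_intros)
  have "real n \<in> \<int>" "real n \<noteq> 0" using mn by auto
  then show "integral J (\<lambda>t. cos (pi / l * n * f t) * w t) = 0"
    and "integral J (\<lambda>t. sin (pi / l * n * f t) * w t) = 0"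
    unfolding J_def
    by (rule integral_unique[OF weighted[OF has_integral_cos_period[OF l]]]
             integral_unique[OF weighted[OF has_integral_sin_period[OF l]]];
        (assumption | intro continuous_intros))+
qed

lemma filterlim_ray_inv_at_top: "filterlim ray_inv at_top at_top"
  unfolding filterlim_at_top
proof
  fix B :: real
  show "eventually (\<lambda>x. B \<le> ray_inv x) at_top"
    using eventually_gt_at_top[of "f (max B T0)"]
  proof eventually_elim
    case (elim x)
    then have x: "f T0 \<le> x"
      using strict_mono_on_leD[OF strict_mono, of T0 "max B T0"] by auto
    show ?case
    proof (rule ccontr)
      assume "\<not> B \<le> ray_inv x"
      then have "f (ray_inv x) < f (max B T0)"
        using ray_inv[OF x] by (intro strict_mono_onD[OF strict_mono]) auto
      then show False using elim ray_inv[OF x] by simp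
    qed
  qed
qed


lemma ray_inv_gap_asymp_equiv:
  assumes gap: "(\<lambda>t. t - f t) \<sim>[at_top] (\<lambda>t. c * primepi t)" and c: "c > 0"
  shows "(\<lambda>x. ray_inv x - x) \<sim>[at_top] (\<lambda>x. c * primepi x)"
proof -
  have "eventually (\<lambda>x. f (ray_inv x) = x) at_top"
    using eventually_ge_at_top[of "f T0"] by eventually_elim (rule ray_inv)
  then have A: "(\<lambda>x. ray_inv x - x) \<sim>[at_top] (\<lambda>x. c * primepi (ray_inv x))"
    using asymp_equiv_compose'[OF gap filterlim_ray_inv_at_top]
    by (subst asymp_equiv_cong) (auto elim: eventually_mono)
  have "filterlim (\<lambda>x. c * primepi (ray_inv x)) at_top at_top"
    using filterlim_compose[OF filterlim_primepi_at_top filterlim_ray_inv_at_top]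
    by (rule filterlim_tendsto_pos_mult_at_top[OF tendsto_const c])
  then have "filterlim (\<lambda>x. ray_inv x - x) at_top at_top"
    by (rule asymp_equiv_at_top_transfer[OF asymp_equiv_symI[OF A]])
  then have "eventually (\<lambda>x. 0 \<le> ray_inv x - x) at_top"
    unfolding filterlim_at_top by blast
  moreover have "eventually (\<lambda>x. \<bar>ray_inv x - x\<bar> \<le> 2 * \<bar>c * primepi (ray_inv x)\<bar>) at_top"
    using asymp_equiv_imp_eventually_le[OF A] by simp
  ultimately have "eventually (\<lambda>x. x \<le> ray_inv x \<and> ray_inv x - x \<le> 2 * c * primepi (ray_inv x))
                     at_top"
    by eventually_elim (use c primepi_nonneg in \<open>auto simp: abs_mult\<close>)
  then have "(\<lambda>x. primepi x) \<sim>[at_top] (\<lambda>x. primepi (ray_inv x))"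
    by (rule primepi_asymp_equiv_of_gap[OF filterlim_ident])
  then have "(\<lambda>x. c * primepi x) \<sim>[at_top] (\<lambda>x. c * primepi (ray_inv x))"
    by (rule asymp_equiv_mult[OF asymp_equiv_refl])
  then show ?thesis by (rule asymp_equiv_trans[OF A asymp_equiv_symI])
qed

lemma setdist_ray_inv_interval_asymp_equiv:
  fixes a :: "'b \<Rightarrow> real"
  assumes gap: "(\<lambda>t. t - f t) \<sim>[at_top] (\<lambda>t. c * primepi t)" and c: "c > 0"
    and a: "filterlim a at_top F" and d: "d \<ge> 0"
  defines "D k \<equiv> setdist {a k..a k + d} {ray_inv (a k)..ray_inv (a k + d)}"
  shows "eventually (\<lambda>k. a k + d < ray_inv (a k)) F"
    and "D \<sim>[F] (\<lambda>k. c * primepi (a k))"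
    and "filterlim D at_top F"
proof -
  have G: "(\<lambda>k. ray_inv (a k) - a k) \<sim>[F] (\<lambda>k. c * primepi (a k))"
    by (rule asymp_equiv_compose'[OF ray_inv_gap_asymp_equiv[OF gap c] a])
  have G_top: "filterlim (\<lambda>k. c * primepi (a k)) at_top F"
    using filterlim_compose[OF filterlim_primepi_at_top a]
    by (rule filterlim_tendsto_pos_mult_at_top[OF tendsto_const c])
  then have "filterlim (\<lambda>k. ray_inv (a k) - a k) at_top F"
    by (rule asymp_equiv_at_top_transfer[OF asymp_equiv_symI[OF G]])
  then have "eventually (\<lambda>k. d < ray_inv (a k) - a k) F"
    unfolding filterlim_at_top_dense by blast
  then show ev: "eventually (\<lambda>k. a k + d < ray_inv (a k)) F"
    by (rule eventually_mono) simp
  have "eventually (\<lambda>k. D k = ray_inv (a k) - a k - d) F"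
    using ev a[unfolded filterlim_at_top, rule_format, of "f T0"]
  proof eventually_elim
    case (elim k)
    then have "ray_inv (a k) \<le> ray_inv (a k + d)" using d by (intro ray_inv_mono) auto
    then show ?case unfolding D_def using elim d by (subst setdist_atLeastAtMost) auto
  qed
  moreover have "(\<lambda>k. ray_inv (a k) - a k + - d) \<sim>[F] (\<lambda>k. c * primepi (a k))"
  proof (subst asymp_equiv_add_right)
    have "eventually (\<lambda>k. 0 < c * primepi (a k)) F"
      using G_top unfolding filterlim_at_top_dense by blast
    then show "(\<lambda>_. - d) \<in> o[F](\<lambda>k. c * primepi (a k))"
      by (intro smalloI_tendsto tendsto_divide_0[OF tendsto_const]
            filterlim_at_top_imp_at_infinity[OF G_top]) (auto elim: eventually_mono)
  qed (rule G)
  ultimately show D: "D \<sim>[F] (\<lambda>k. c * primepi (a k))"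
    by (subst asymp_equiv_cong) (auto elim: eventually_mono)
  show "filterlim D at_top F"
    by (rule asymp_equiv_at_top_transfer[OF asymp_equiv_symI[OF D] G_top])
qed

end

theorem theorem1:
  fixes mu phi :: "real \<Rightarrow> real" and T0 l :: real
  assumes mu_cont: "continuous_on UNIV mu"
    and mu_ge: "\<forall>y>0. mu y \<ge> 7 * y * ln y"
    and ladder: "jacobs_ladder mu T0 phi"
    and phi1_deriv: "\<forall>t\<ge>T0. (phi1 phi has_real_derivative Ztilde2 mu phi t) (at t within {T0..})"
    and phi1_mono: "strict_mono_on {T0..} (phi1 phi)"
    and phi1_T0: "phi1 phi T0 \<le> T0"
    and phi1_asymp: "(\<lambda>t. t - phi1 phi t) \<sim>[at_top] (\<lambda>t. (1 - euler_mascheroni) * primepi t)"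
    and l_pos: "l > 0"
  shows
    "(\<forall>K::nat. 2 * l * real K \<ge> T0 \<and> 2 * l \<le> 2 * l * real K / ln (2 * l * real K) \<longrightarrow>
       (let J = {2 * l * real K .. 2 * l * (real K + 1)};
            Jo = {phi1_inv phi T0 (2 * l * real K) .. phi1_inv phi T0 (2 * l * (real K + 1))}
        in phi1 phi ` Jo = J \<and>
           (\<forall>m n :: nat. m \<ge> 1 \<and> n \<ge> 1 \<longrightarrow>
              integral Jo (\<lambda>t. cos (pi / l * real m * phi1 phi t) * cos (pi / l * real n * phi1 phi t)
                                * Ztilde2 mu phi t) = (if m = n then l else 0)
            \<and> integral Jo (\<lambda>t. sin (pi / l * real m * phi1 phi t) * sin (pi / l * real n * phi1 phi t)
                                * Ztilde2 mu phi t) = (if m = n then l else 0)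
            \<and> integral Jo (\<lambda>t. sin (pi / l * real m * phi1 phi t) * cos (pi / l * real n * phi1 phi t)
                                * Ztilde2 mu phi t) = 0) \<and>
           (\<forall>n :: nat. n \<ge> 1 \<longrightarrow>
              integral Jo (\<lambda>t. cos (pi / l * real n * phi1 phi t) * Ztilde2 mu phi t) = 0
            \<and> integral Jo (\<lambda>t. sin (pi / l * real n * phi1 phi t) * Ztilde2 mu phi t) = 0)))
   \<and> (\<forall>\<^sub>F K in sequentially. 2 * l * (real K + 1) < phi1_inv phi T0 (2 * l * real K))
   \<and> (\<lambda>K. setdist {2 * l * real K .. 2 * l * (real K + 1)}
                    {phi1_inv phi T0 (2 * l * real K) .. phi1_inv phi T0 (2 * l * (real K + 1))})
       \<sim>[sequentially] (\<lambda>K. (1 - euler_mascheroni) * primepi (2 * l * real K))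
   \<and> filterlim (\<lambda>K. setdist {2 * l * real K .. 2 * l * (real K + 1)}
                    {phi1_inv phi T0 (2 * l * real K) .. phi1_inv phi T0 (2 * l * (real K + 1))})
       at_top sequentially"
proof -
  have c: "0 < 1 - (euler_mascheroni :: real)" "1 - (euler_mascheroni :: real) < 1"
    using euler_mascheroni_pos euler_mascheroni_less_13_over_22 by linarith+
  have "continuous_on {T0..} (phi1 phi)"
    using phi1_deriv by (intro DERIV_continuous_on) auto
  then interpret increasing_on_ray T0 "phi1 phi"
    using phi1_mono filterlim_at_top_of_primepi_gap[OF phi1_asymp c] by unfold_locales
  have inv: "phi1_inv phi T0 = ray_inv"
    unfolding phi1_inv_def ray_inv_def ..
  have period: "2 * l * (real K + 1) = 2 * l * real K + 2 * l" for K
    by (simp add: algebra_simps)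
  have "filterlim (\<lambda>K. 2 * l * real K) at_top sequentially"
    using l_pos by (intro filterlim_tendsto_pos_mult_at_top[OF tendsto_const _ filterlim_real_sequentially]) auto
  note distance = setdist_ray_inv_interval_asymp_equiv[OF phi1_asymp c(1) this, of "2 * l"]
  show ?thesis
    unfolding inv period Let_def
    by (intro conjI allI impI distance image_ray_inv_interval
          trig_system_orthogonal_on_ray_inv[OF phi1_deriv l_pos])
       (use l_pos phi1_T0 in auto)
qed

end
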